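(* Let $k\ge1$, $n\ge2$, $\mathbf{u}\in\mathbb{S}^{k-1}$, $\alpha_1,\dots,\alpha_n>0$, $c_a,c_u\in\mathbb{R}\setminus\{0\}$, $\sigma\ge0$, and let $\mathbf{u}_1,\dots,\mathbf{u}_n$ be i.i.d. $\sim\mathcal{U}^k$. Define for $c\in\mathbb{R}$ $J(c)=c_a^2c_u^2\,\mathbb{E}\Big[\frac{\sum_{i,j=1}^n(\mathbf{u}_i-\mathbf{u})^\top(\mathbf{u}_j-\mathbf{u})e^{c_u^2c\,\mathbf{u}_i^\top\mathbf{u}+c_u^2c\,\mathbf{u}_j^\top\mathbf{u}}\alpha_i\alpha_j}{(\sum_{i=1}^n e^{c_u^2c\,\mathbf{u}_i^\top\mathbf{u}}\alpha_i)^2}\Big]+\sigma^2\,\mathbb{E}\Big[\frac{\sum_{i=1}^n e^{2c_u^2c\,\mathbf{u}_i^\top\mathbf{u}}\alpha_i^2}{(\sum_{i=1}^n e^{c_u^2c\,\mathbf{u}_i^\top\mathbf{u}}\alpha_i)^2}\Big]$. Then for every $\delta>0$, $0\notin\arg\min_{0\le c\le\delta}J(c)$.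
   Context: $\mathcal{U}^k$ is the uniform distribution on $\mathbb{S}^{k-1}$. *)

theory Defs
  imports "HOL-Probability.Probability"
begin

text \<open>Uniform distribution on the unit sphere of a Euclidean space (the normalized
  surface measure), realised as the cone measure: push forward the uniform
  distribution on the open unit ball under radial projection x \<mapsto> x / |x|.\<close>
definition unif_sphere :: "'a::euclidean_space measure" where
  "unif_sphere = distr (uniform_measure lborel (ball 0 1)) borel (\<lambda>x. sgn x)"

definition Jobj :: "nat \<Rightarrow> 'a::euclidean_space \<Rightarrow> (nat \<Rightarrow> real) \<Rightarrow> real \<Rightarrow> real \<Rightarrow> real \<Rightarrow> real \<Rightarrow> real" where
  "Jobj n u \<alpha> ca cu \<sigma> c =
     ca\<^sup>2 * cu\<^sup>2 *
       (\<integral>U. (\<Sum>i<n. \<Sum>j<n. ((U i - u) \<bullet> (U j - u)) *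
                 exp (cu\<^sup>2 * c * (U i \<bullet> u) + cu\<^sup>2 * c * (U j \<bullet> u)) * \<alpha> i * \<alpha> j)
             / (\<Sum>i<n. exp (cu\<^sup>2 * c * (U i \<bullet> u)) * \<alpha> i)\<^sup>2
          \<partial>(PiM {..<n} (\<lambda>_. unif_sphere)))
     + \<sigma>\<^sup>2 *
       (\<integral>U. (\<Sum>i<n. exp (2 * cu\<^sup>2 * c * (U i \<bullet> u)) * (\<alpha> i)\<^sup>2)
             / (\<Sum>i<n. exp (cu\<^sup>2 * c * (U i \<bullet> u)) * \<alpha> i)\<^sup>2
          \<partial>(PiM {..<n} (\<lambda>_. unif_sphere)))"

end

theory Submission
  imports Defs
begin

text \<open>
  Write \<open>J(c) = ca\<^sup>2 cu\<^sup>2 I\<^sub>1(cu\<^sup>2 c) + \<sigma>\<^sup>2 I\<^sub>2(cu\<^sup>2 c)\<close>, where \<open>I\<^sub>k(t)\<close> is the expectation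
  of a quadratic form \<open>\<Sum>\<^sub>i\<^sub>j D\<^sub>k(i,j) p\<^sub>i p\<^sub>j\<close> in the softmax weights
  \<open>p\<^sub>i \<propto> \<alpha>\<^sub>i exp (t x\<^sub>i)\<close>, \<open>x\<^sub>i = u\<^sub>i \<bullet> u\<close>, with \<open>D\<^sub>1(i,j) = (u\<^sub>i - u) \<bullet> (u\<^sub>j - u)\<close>
  and \<open>D\<^sub>2(i,j) = [i = j]\<close>. Since \<open>dp\<^sub>i/dt = p\<^sub>i (x\<^sub>i - \<Sum>\<^sub>l p\<^sub>l x\<^sub>l)\<close>, these forms
  have bounded derivative in \<open>t\<close>, so dominated convergence lets us differentiate under the
  expectation at \<open>t = 0\<close>, where \<open>p\<^sub>i = q\<^sub>i = \<alpha>\<^sub>i / \<Sum>\<alpha>\<close>. The derivative is then a linear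
  combination of moments \<open>E[D\<^sub>k(i,j) x\<^sub>l]\<close>; flipping the sign of a single \<open>u\<^sub>l\<close> preserves
  the distribution, which kills all odd moments. Hence \<open>I\<^sub>2'(0) = 0\<close> and
  \<open>I\<^sub>1'(0) = -2 m (1 - \<Sum> q\<^sub>i\<^sup>2)\<close> with \<open>m = E[(u\<^sub>1 \<bullet> u)\<^sup>2] > 0\<close>. As \<open>n \<ge> 2\<close>,
  \<open>\<Sum> q\<^sub>i\<^sup>2 < 1\<close>, so the right derivative of \<open>J\<close> at \<open>0\<close> is negative and \<open>J(c) < J(0)\<close>
  for small \<open>c > 0\<close>.
\<close>

section \<open>Softmax-weighted quadratic forms\<close>

definition softmax_weight :: "nat \<Rightarrow> (nat \<Rightarrow> real) \<Rightarrow> (nat \<Rightarrow> real) \<Rightarrow> real \<Rightarrow> nat \<Rightarrow> real" where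
  "softmax_weight n x a t i = exp (t * x i) * a i / (\<Sum>l<n. exp (t * x l) * a l)"

definition softmax_mean :: "nat \<Rightarrow> (nat \<Rightarrow> real) \<Rightarrow> (nat \<Rightarrow> real) \<Rightarrow> real \<Rightarrow> real" where
  "softmax_mean n x a t = (\<Sum>l<n. softmax_weight n x a t l * x l)"

definition softmax_quadform ::
    "nat \<Rightarrow> (nat \<Rightarrow> nat \<Rightarrow> real) \<Rightarrow> (nat \<Rightarrow> real) \<Rightarrow> (nat \<Rightarrow> real) \<Rightarrow> real \<Rightarrow> real" where
  "softmax_quadform n d x a t =
     (\<Sum>i<n. \<Sum>j<n. d i j * softmax_weight n x a t i * softmax_weight n x a t j)"

definition softmax_quadform_deriv ::
    "nat \<Rightarrow> (nat \<Rightarrow> nat \<Rightarrow> real) \<Rightarrow> (nat \<Rightarrow> real) \<Rightarrow> (nat \<Rightarrow> real) \<Rightarrow> real \<Rightarrow> real" where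
  "softmax_quadform_deriv n d x a t =
     (\<Sum>i<n. \<Sum>j<n. d i j * softmax_weight n x a t i * softmax_weight n x a t j
                      * (x i + x j - 2 * softmax_mean n x a t))"

context
  fixes n :: nat and a :: "nat \<Rightarrow> real"
  assumes n_pos: "0 < n" and a_pos: "\<forall>i<n. 0 < a i"
begin

lemma softmax_normalizer_pos: "0 < (\<Sum>l<n. exp (t * x l) * a l)"
  using n_pos a_pos by (intro sum_pos) auto

lemma softmax_weight_nonneg: "i < n \<Longrightarrow> 0 \<le> softmax_weight n x a t i"
  using a_pos softmax_normalizer_pos[of t x] by (simp add: softmax_weight_def less_imp_le)

lemma sum_softmax_weight: "(\<Sum>i<n. softmax_weight n x a t i) = 1"
  using softmax_normalizer_pos[of t x]
  by (simp add: softmax_weight_def sum_divide_distrib[symmetric])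

lemma abs_softmax_mean_le:
  assumes "\<forall>i<n. \<bar>x i\<bar> \<le> 1"
  shows "\<bar>softmax_mean n x a t\<bar> \<le> 1"
proof -
  have "\<bar>softmax_mean n x a t\<bar> \<le> (\<Sum>l<n. \<bar>softmax_weight n x a t l * x l\<bar>)"
    unfolding softmax_mean_def by (rule sum_abs)
  also have "\<dots> \<le> (\<Sum>l<n. softmax_weight n x a t l)"
    using softmax_weight_nonneg assms by (intro sum_mono) (simp add: abs_mult mult_left_le)
  finally show ?thesis by (simp add: sum_softmax_weight)
qed

lemma has_real_derivative_softmax_weight:
  "((\<lambda>t. softmax_weight n x a t i) has_real_derivative
      softmax_weight n x a t i * (x i - softmax_mean n x a t)) (at t)"
proof -
  define W where "W t = (\<Sum>l<n. exp (t * x l) * a l)" for t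
  have W_nonzero: "W t \<noteq> 0"
    using softmax_normalizer_pos[of t x] by (simp add: W_def)
  have "(W has_real_derivative (\<Sum>l<n. x l * exp (t * x l) * a l)) (at t)"
    unfolding W_def by (auto intro!: derivative_eq_intros simp: mult_ac)
  then have "((\<lambda>t. exp (t * x i) * a i / W t) has_real_derivative
      (x i * exp (t * x i) * a i * W t - exp (t * x i) * a i * (\<Sum>l<n. x l * exp (t * x l) * a l))
        / (W t * W t)) (at t)"
    by (intro DERIV_divide W_nonzero) (auto intro!: derivative_eq_intros)
  moreover have "(x i * exp (t * x i) * a i * W t - exp (t * x i) * a i * (\<Sum>l<n. x l * exp (t * x l) * a l))
        / (W t * W t) = softmax_weight n x a t i * (x i - softmax_mean n x a t)"
    unfolding softmax_weight_def softmax_mean_def W_def[symmetric] using W_nonzero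
    by (simp add: field_simps sum_divide_distrib[symmetric] sum_distrib_left)
  ultimately show ?thesis
    by (simp add: softmax_weight_def W_def)
qed

lemma has_real_derivative_softmax_quadform:
  "((\<lambda>t. softmax_quadform n d x a t) has_real_derivative softmax_quadform_deriv n d x a t) (at t)"
  unfolding softmax_quadform_def softmax_quadform_deriv_def
  by (auto intro!: DERIV_sum derivative_eq_intros has_real_derivative_softmax_weight
           simp: algebra_simps)

lemma abs_softmax_quadform_le:
  assumes "\<forall>i<n. \<forall>j<n. \<bar>d i j\<bar> \<le> B"
  shows "\<bar>softmax_quadform n d x a t\<bar> \<le> B"
proof -
  let ?p = "softmax_weight n x a t"
  have "\<bar>softmax_quadform n d x a t\<bar> \<le> (\<Sum>i<n. \<Sum>j<n. \<bar>d i j * ?p i * ?p j\<bar>)"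
    unfolding softmax_quadform_def by (rule order_trans[OF sum_abs sum_mono[OF sum_abs]])
  also have "\<dots> \<le> (\<Sum>i<n. \<Sum>j<n. B * ?p i * ?p j)"
    using assms softmax_weight_nonneg
    by (intro sum_mono) (simp add: abs_mult mult_right_mono)
  also have "\<dots> = B"
    by (simp add: sum_distrib_left[symmetric] sum_distrib_right[symmetric] sum_softmax_weight)
  finally show ?thesis .
qed

lemma abs_softmax_quadform_deriv_le:
  assumes "\<forall>i<n. \<forall>j<n. \<bar>d i j\<bar> \<le> B" and "\<forall>i<n. \<bar>x i\<bar> \<le> 1"
  shows "\<bar>softmax_quadform_deriv n d x a t\<bar> \<le> 4 * B"
proof -
  let ?p = "softmax_weight n x a t" and ?m = "softmax_mean n x a t"
  have centered_le: "\<bar>x i + x j - 2 * ?m\<bar> \<le> 4" if "i < n" "j < n" for i j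
  proof -
    have "\<bar>x i\<bar> \<le> 1" "\<bar>x j\<bar> \<le> 1" using assms(2) that by auto
    then show ?thesis using abs_softmax_mean_le[OF assms(2), of t] by linarith
  qed
  have "\<bar>d i j * ?p i * ?p j * (x i + x j - 2 * ?m)\<bar> \<le> 4 * B * ?p i * ?p j"
    if "i < n" "j < n" for i j
  proof -
    have "\<bar>d i j\<bar> * \<bar>x i + x j - 2 * ?m\<bar> \<le> B * 4"
      using that assms(1) centered_le by (intro mult_mono) force+
    then have "\<bar>d i j\<bar> * \<bar>x i + x j - 2 * ?m\<bar> * (?p i * ?p j) \<le> B * 4 * (?p i * ?p j)"
      using that softmax_weight_nonneg by (intro mult_right_mono) auto
    then show ?thesis
      using that softmax_weight_nonneg by (simp add: abs_mult mult_ac)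
  qed
  then have "\<bar>softmax_quadform_deriv n d x a t\<bar> \<le> (\<Sum>i<n. \<Sum>j<n. 4 * B * ?p i * ?p j)"
    unfolding softmax_quadform_deriv_def
    by (intro order_trans[OF sum_abs sum_mono[OF order_trans[OF sum_abs sum_mono]]]) auto
  also have "\<dots> = 4 * B"
    by (simp add: sum_distrib_left[symmetric] sum_distrib_right[symmetric] sum_softmax_weight)
  finally show ?thesis .
qed

lemma abs_softmax_quadform_diff_le:
  assumes "\<forall>i<n. \<forall>j<n. \<bar>d i j\<bar> \<le> B" and "\<forall>i<n. \<bar>x i\<bar> \<le> 1" and "0 < t"
  shows "\<bar>softmax_quadform n d x a t - softmax_quadform n d x a 0\<bar> \<le> 4 * B * t"
proof -
  obtain z where "softmax_quadform n d x a t - softmax_quadform n d x a 0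
      = (t - 0) * softmax_quadform_deriv n d x a z"
    using MVT2[OF \<open>0 < t\<close> has_real_derivative_softmax_quadform] by blast
  then show ?thesis
    using abs_softmax_quadform_deriv_le[OF assms(1,2), of z] \<open>0 < t\<close>
    by (simp add: abs_mult mult.commute)
qed

lemma softmax_quadform_diff_quotient_tendsto:
  assumes "c \<longlonglongrightarrow> 0" and "\<And>k. c k \<noteq> 0"
  shows "(\<lambda>k. (softmax_quadform n d x a (c k) - softmax_quadform n d x a 0) / c k)
           \<longlonglongrightarrow> softmax_quadform_deriv n d x a 0"
proof -
  have "filterlim c (at 0) sequentially"
    using assms by (simp add: filterlim_at)
  from filterlim_compose[OF DERIV_D[OF has_real_derivative_softmax_quadform[of d x 0]] this]
  show ?thesis by simp
qed

lemma softmax_quadform_eq: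
  "softmax_quadform n d x a t =
     (\<Sum>i<n. \<Sum>j<n. d i j * exp (t * x i + t * x j) * a i * a j) / (\<Sum>i<n. exp (t * x i) * a i)\<^sup>2"
  using softmax_normalizer_pos[of t x]
  by (simp add: softmax_quadform_def softmax_weight_def sum_divide_distrib exp_add
                power2_eq_square field_simps)

lemma softmax_quadform_diagonal_eq:
  "softmax_quadform n (\<lambda>i j. of_bool (i = j)) x a t =
     (\<Sum>i<n. exp (2 * t * x i) * (a i)\<^sup>2) / (\<Sum>i<n. exp (t * x i) * a i)\<^sup>2"
proof -
  have "softmax_quadform n (\<lambda>i j. of_bool (i = j)) x a t =
      (\<Sum>i<n. softmax_weight n x a t i * softmax_weight n x a t i)"
    unfolding softmax_quadform_def by (simp add: of_bool_def if_distrib[of "\<lambda>z. z * _"] cong: if_cong)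
  moreover have "exp (2 * t * x i) = exp (t * x i) * exp (t * x i)" for i
    by (simp add: exp_add[symmetric])
  ultimately show ?thesis
    by (simp add: softmax_weight_def sum_divide_distrib power2_eq_square mult_ac)
qed

end

lemma sum_centered_indicator:
  fixes q y :: "nat \<Rightarrow> real"
  assumes "i < n" "j < n"
  shows "(\<Sum>l<n. (of_bool (l = i) + of_bool (l = j) - 2 * q l) * y l)
           = y i + y j - 2 * (\<Sum>l<n. q l * y l)"
  using assms by (simp add: ring_distribs sum.distrib sum_subtractf sum_distrib_left mult.assoc)

lemma softmax_weight_0: "softmax_weight n x a 0 i = a i / (\<Sum>l<n. a l)"
  by (simp add: softmax_weight_def)

lemma softmax_quadform_deriv_0:
  "softmax_quadform_deriv n d x a 0 =
     (\<Sum>i<n. \<Sum>j<n. \<Sum>l<n. a i / (\<Sum>k<n. a k) * (a j / (\<Sum>k<n. a k))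
        * (of_bool (l = i) + of_bool (l = j) - 2 * (a l / (\<Sum>k<n. a k))) * (d i j * x l))"
proof -
  define q where "q i = a i / (\<Sum>k<n. a k)" for i
  have "(\<Sum>l<n. q i * q j * (of_bool (l = i) + of_bool (l = j) - 2 * q l) * (d i j * x l))
      = d i j * q i * q j * (x i + x j - 2 * (\<Sum>l<n. q l * x l))" if "i < n" "j < n" for i j
  proof -
    have "(\<Sum>l<n. q i * q j * (of_bool (l = i) + of_bool (l = j) - 2 * q l) * (d i j * x l))
        = d i j * q i * q j * (\<Sum>l<n. (of_bool (l = i) + of_bool (l = j) - 2 * q l) * x l)"
      by (simp add: sum_distrib_left mult_ac)
    then show ?thesis using sum_centered_indicator[OF that] by simp
  qed
  then show ?thesis
    unfolding softmax_quadform_deriv_def softmax_mean_def softmax_weight_0 q_def[symmetric]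
    by (intro sum.cong refl) auto
qed

lemma sum_weight_pairs_centered_eq:
  fixes q :: "nat \<Rightarrow> real"
  assumes "(\<Sum>i<n. q i) = 1"
  shows "(\<Sum>i<n. \<Sum>j<n. \<Sum>l<n. q i * q j * (of_bool (l = i) + of_bool (l = j) - 2 * q l)
            * (of_bool (l = i) + of_bool (l = j))) = 2 * (1 - (\<Sum>i<n. (q i)\<^sup>2))"
proof -
  have "(\<Sum>l<n. q i * q j * (of_bool (l = i) + of_bool (l = j) - 2 * q l)
            * (of_bool (l = i) + of_bool (l = j)))
      = q i * q j * (2 + 2 * of_bool (i = j) - 2 * q i - 2 * q j)" if "i < n" "j < n" for i j
  proof -
    have "(\<Sum>l<n. q l * (of_bool (l = i) + of_bool (l = j))) = q i + q j"
      using that by (simp add: ring_distribs sum.distrib)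
    then have "(\<Sum>l<n. (of_bool (l = i) + of_bool (l = j) - 2 * q l) * (of_bool (l = i) + of_bool (l = j)))
        = 2 + 2 * of_bool (i = j) - 2 * q i - 2 * q j"
      using sum_centered_indicator[OF that, of q "\<lambda>l. of_bool (l = i) + of_bool (l = j)"]
      by (simp add: eq_commute[of j i])
    then show ?thesis by (simp add: sum_distrib_left[symmetric] mult.assoc)
  qed
  then have "(\<Sum>i<n. \<Sum>j<n. \<Sum>l<n. q i * q j * (of_bool (l = i) + of_bool (l = j) - 2 * q l)
            * (of_bool (l = i) + of_bool (l = j)))
      = (\<Sum>i<n. \<Sum>j<n. q i * q j * (2 + 2 * of_bool (i = j) - 2 * q i - 2 * q j))"
    by simp
  also have "\<dots> = 2 * (\<Sum>i<n. q i) * (\<Sum>j<n. q j) + 2 * (\<Sum>i<n. \<Sum>j<n. q i * q j * of_bool (i = j))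
      - 2 * (\<Sum>i<n. (q i)\<^sup>2) * (\<Sum>j<n. q j) - 2 * (\<Sum>i<n. q i) * (\<Sum>j<n. (q j)\<^sup>2)"
    by (simp add: algebra_simps sum.distrib sum_subtractf sum_distrib_left sum_distrib_right
                  power2_eq_square)
  also have "(\<Sum>i<n. \<Sum>j<n. q i * q j * of_bool (i = j)) = (\<Sum>i<n. (q i)\<^sup>2)"
  proof (intro sum.cong refl)
    fix i assume "i \<in> {..<n}"
    then have "{..<n} \<inter> {j. i = j} = {i}" by auto
    then show "(\<Sum>j<n. q i * q j * of_bool (i = j)) = (q i)\<^sup>2"
      by (simp only: sum_mult_of_bool_eq[OF finite_lessThan]) (simp add: power2_eq_square)
  qed
  finally show ?thesis using assms by simp
qed


lemma sum_normalized_square_lt_1: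
  fixes a :: "nat \<Rightarrow> real"
  assumes "2 \<le> n" and "\<forall>i<n. 0 < a i"
  shows "(\<Sum>i<n. (a i / (\<Sum>k<n. a k))\<^sup>2) < 1"
proof -
  let ?A = "\<Sum>k<n. a k"
  have A_pos: "0 < ?A" using assms by (intro sum_pos) (auto simp: lessThan_empty_iff)
  have a_lt: "a i < ?A" if "i < n" for i
  proof -
    define j where "j = (if i = 0 then 1 else 0 :: nat)"
    have j: "j < n" "j \<noteq> i" using assms(1) by (auto simp: j_def)
    have "(\<Sum>k\<in>{i, j}. a k) \<le> ?A"
      using that j assms(2) by (intro sum_mono2) auto
    then show ?thesis using j assms(2) that by auto
  qed
  have "(\<Sum>i<n. (a i / ?A)\<^sup>2) < (\<Sum>i<n. a i / ?A)"
  proof (rule sum_strict_mono)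
    fix i assume "i \<in> {..<n}"
    then have "0 < a i / ?A" "a i / ?A < 1" using a_lt[of i] assms(2) A_pos by auto
    then show "(a i / ?A)\<^sup>2 < a i / ?A"
      using mult_strict_left_mono[of "a i / ?A" 1 "a i / ?A"] by (simp add: power2_eq_square)
  qed (use assms in \<open>auto simp: lessThan_empty_iff\<close>)
  also have "\<dots> = 1" using A_pos by (simp add: sum_divide_distrib[symmetric])
  finally show ?thesis .
qed

section \<open>Sign-symmetric distributions and the uniform distribution on the sphere\<close>

lemma emeasure_lborel_unit_ball:
  "emeasure lborel (ball (0::'a::euclidean_space) 1) \<noteq> 0"
  "emeasure lborel (ball (0::'a::euclidean_space) 1) \<noteq> \<infinity>"
  using unit_ball_vol_pos[of "real DIM('a)"] emeasure_lborel_ball_finite[of "0::'a" 1]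
  by (auto simp: emeasure_ball less_le)

lemma distr_uminus_uniform_measure_ball:
  "distr (uniform_measure lborel (ball (0::'a::euclidean_space) r)) borel uminus
     = uniform_measure lborel (ball 0 r)"
proof (rule measure_eqI)
  fix A :: "'a set"
  assume "A \<in> sets (distr (uniform_measure lborel (ball 0 r)) borel uminus)"
  then have A: "A \<in> sets borel" by simp
  have lborel_uminus: "distr lborel borel (uminus :: 'a \<Rightarrow> 'a) = lborel"
    using lborel_affine[of "-1" "0::'a"] by (simp add: density_1)
  have "ball 0 r \<inter> uminus -` A = uminus -` (ball (0::'a) r \<inter> A) \<inter> space lborel"
    by auto
  then have "emeasure lborel (ball 0 r \<inter> uminus -` A) = emeasure lborel (ball (0::'a) r \<inter> A)"
    using A by (subst (2) lborel_uminus[symmetric]) (simp add: emeasure_distr)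
  then show "emeasure (distr (uniform_measure lborel (ball 0 r)) borel uminus) A
      = emeasure (uniform_measure lborel (ball (0::'a) r)) A"
    using A measurable_sets[OF borel_measurable_uminus[OF measurable_ident_sets[OF refl]] A]
    by (simp add: emeasure_distr emeasure_uniform_measure)
qed simp

lemma prob_space_unif_sphere: "prob_space (unif_sphere :: 'a::euclidean_space measure)"
  unfolding unif_sphere_def
  by (intro prob_space.prob_space_distr prob_space_uniform_measure emeasure_lborel_unit_ball) auto

lemma sets_unif_sphere [measurable_cong, simp]:
  "sets (unif_sphere :: 'a::euclidean_space measure) = sets borel"
  unfolding unif_sphere_def by simp

lemma space_unif_sphere [simp]: "space (unif_sphere :: 'a::euclidean_space measure) = UNIV"
  unfolding unif_sphere_def by simp

lemma AE_unif_sphere_norm_le: "AE v in (unif_sphere :: 'a::euclidean_space measure). norm v \<le> 1"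
  unfolding unif_sphere_def by (subst AE_distr_iff) (auto simp: norm_sgn)

lemma distr_uminus_unif_sphere:
  "distr (unif_sphere :: 'a::euclidean_space measure) unif_sphere uminus = unif_sphere"
proof -
  let ?N = "uniform_measure lborel (ball (0::'a) 1)"
  have "distr (unif_sphere :: 'a measure) unif_sphere uminus = distr (distr ?N borel sgn) borel uminus"
    unfolding unif_sphere_def by (intro distr_cong) auto
  also have "\<dots> = distr ?N borel (sgn \<circ> uminus)"
    by (subst distr_distr) (auto simp: comp_def sgn_minus)
  also have "\<dots> = distr (distr ?N borel uminus) borel sgn"
    by (subst distr_distr) auto
  finally show ?thesis
    unfolding distr_uminus_uniform_measure_ball unif_sphere_def .
qed


definition flip_coord :: "'i set \<Rightarrow> 'i \<Rightarrow> ('i \<Rightarrow> 'a::uminus) \<Rightarrow> 'i \<Rightarrow> 'a" where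
  "flip_coord I k U = (\<lambda>i\<in>I. if i = k then - U i else U i)"

lemma flip_coord_apply: "i \<in> I \<Longrightarrow> flip_coord I k U i = (if i = k then - U i else U i)"
  by (simp add: flip_coord_def)

locale symmetric_prob_space = prob_space M for M :: "'a::euclidean_space measure" +
  assumes sets_eq_borel [measurable_cong]: "sets M = sets borel"
    and distr_uminus: "distr M M uminus = M"
begin

lemma space_eq_UNIV [simp]: "space M = UNIV"
  using sets_eq_imp_space_eq[OF sets_eq_borel] by simp

lemma measurable_flip_coord [measurable]:
  "flip_coord I k \<in> PiM I (\<lambda>_. M) \<rightarrow>\<^sub>M PiM I (\<lambda>_. M)"
  unfolding flip_coord_def by measurable

lemma distr_PiM_flip_coord:
  assumes "finite I"
  shows "distr (PiM I (\<lambda>_. M)) (PiM I (\<lambda>_. M)) (flip_coord I k) = PiM I (\<lambda>_. M)"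
proof -
  interpret product_prob_space "\<lambda>_. M"
    by (intro product_prob_spaceI prob_space_axioms)
  show ?thesis
  proof (rule PiM_eqI[OF assms])
    fix A assume A: "\<And>i. i \<in> I \<Longrightarrow> A i \<in> sets M"
    define A' where "A' i = (if i = k then uminus -` A i else A i)" for i
    have "uminus \<in> M \<rightarrow>\<^sub>M M" by measurable
    from measurable_sets[OF this] have A': "A' i \<in> sets M" if "i \<in> I" for i
      using A[OF that] by (auto simp: A'_def)
    have "emeasure (distr (PiM I (\<lambda>_. M)) (PiM I (\<lambda>_. M)) (flip_coord I k)) (Pi\<^sub>E I A)
        = emeasure (PiM I (\<lambda>_. M)) (flip_coord I k -` Pi\<^sub>E I A \<inter> space (PiM I (\<lambda>_. M)))"
      using A assms by (intro emeasure_distr sets_PiM_I_finite) auto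
    also have "flip_coord I k -` Pi\<^sub>E I A \<inter> space (PiM I (\<lambda>_. M)) = Pi\<^sub>E I A'"
      using A sets.sets_into_space
      by (auto simp: flip_coord_def space_PiM PiE_def Pi_def extensional_def A'_def sets_eq_borel
               split: if_splits)
    also have "emeasure (PiM I (\<lambda>_. M)) (Pi\<^sub>E I A') = (\<Prod>i\<in>I. emeasure M (A' i))"
      using A' assms by (intro emeasure_PiM) auto
    also have "\<dots> = (\<Prod>i\<in>I. emeasure M (A i))"
    proof (intro prod.cong refl)
      fix i assume "i \<in> I"
      have "emeasure M (A i) = emeasure (distr M M uminus) (A i)"
        by (simp add: distr_uminus)
      also have "\<dots> = emeasure M (uminus -` A i)"
        using A[OF \<open>i \<in> I\<close>] by (subst emeasure_distr) (auto simp: sets_eq_borel)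
      finally show "emeasure M (A' i) = emeasure M (A i)"
        by (simp add: A'_def)
    qed
    finally show "emeasure (distr (PiM I (\<lambda>_. M)) (PiM I (\<lambda>_. M)) (flip_coord I k)) (Pi\<^sub>E I A)
        = (\<Prod>i\<in>I. emeasure M (A i))" .
  qed simp
qed

lemma integral_PiM_odd_eq_0:
  fixes f :: "('i \<Rightarrow> 'a) \<Rightarrow> real"
  assumes "finite I"
    and [measurable]: "f \<in> borel_measurable (PiM I (\<lambda>_. M))"
    and odd: "\<And>U. U \<in> space (PiM I (\<lambda>_. M)) \<Longrightarrow> f (flip_coord I k U) = - f U"
  shows "(\<integral>U. f U \<partial>PiM I (\<lambda>_. M)) = 0"
proof -
  have "(\<integral>U. f U \<partial>PiM I (\<lambda>_. M)) = (\<integral>U. f U \<partial>distr (PiM I (\<lambda>_. M)) (PiM I (\<lambda>_. M)) (flip_coord I k))"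
    by (simp add: distr_PiM_flip_coord[OF \<open>finite I\<close>])
  also have "\<dots> = (\<integral>U. f (flip_coord I k U) \<partial>PiM I (\<lambda>_. M))"
    by (rule integral_distr) auto
  also have "\<dots> = - (\<integral>U. f U \<partial>PiM I (\<lambda>_. M))"
    by (simp add: odd cong: Bochner_Integration.integral_cong)
  finally show ?thesis by simp
qed

lemma integral_PiM_component:
  fixes h :: "'a \<Rightarrow> real"
  assumes [measurable]: "h \<in> borel_measurable borel" and "i \<in> I"
  shows "(\<integral>U. h (U i) \<partial>PiM I (\<lambda>_. M)) = (\<integral>v. h v \<partial>M)"
proof -
  have "(\<integral>v. h v \<partial>M) = (\<integral>v. h v \<partial>distr (PiM I (\<lambda>_. M)) M (\<lambda>U. U i))"
    using \<open>i \<in> I\<close> by (subst distr_PiM_component) (auto intro: prob_space_axioms)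
  also have "\<dots> = (\<integral>U. h (U i) \<partial>PiM I (\<lambda>_. M))"
    using \<open>i \<in> I\<close> by (intro integral_distr) auto
  finally show ?thesis ..
qed

lemma integral_PiM_inner_component_eq_0:
  assumes "finite I" "k \<in> I"
  shows "(\<integral>U. U k \<bullet> u \<partial>PiM I (\<lambda>_. M)) = 0"
  by (rule integral_PiM_odd_eq_0[where k = k]) (use assms in \<open>auto simp: flip_coord_apply\<close>)

lemma integral_PiM_inner_mult_inner_component_eq_0:
  assumes "finite I" "i \<in> I" "j \<in> I" "k \<in> I"
  shows "(\<integral>U. (U i \<bullet> U j) * (U k \<bullet> u) \<partial>PiM I (\<lambda>_. M)) = 0"
  \<comment> \<open>flip a coordinate that occurs an odd number of times in the integrand\<close>
  by (rule integral_PiM_odd_eq_0[where k = "if i = j then k else if k \<noteq> i then i else j"])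
     (use assms in \<open>auto simp: flip_coord_apply\<close>)

lemma integral_PiM_inner_mult_inner_component:
  assumes "finite I" "i \<in> I" "k \<in> I"
  shows "(\<integral>U. (U i \<bullet> u) * (U k \<bullet> u) \<partial>PiM I (\<lambda>_. M))
           = (if i = k then (\<integral>v. (v \<bullet> u)\<^sup>2 \<partial>M) else 0)"
proof (cases "i = k")
  case True
  then show ?thesis
    using integral_PiM_component[of "\<lambda>v. (v \<bullet> u)\<^sup>2" i I] assms by (simp add: power2_eq_square)
next
  case False
  then show ?thesis
    by (simp, intro integral_PiM_odd_eq_0[where k = i]) (use assms in \<open>auto simp: flip_coord_apply\<close>)
qed

end

interpretation unif_sphere: symmetric_prob_space "unif_sphere :: 'a::euclidean_space measure"
  by (intro symmetric_prob_space.intro prob_space_unif_sphere symmetric_prob_space_axioms.intro)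
     (simp_all add: distr_uminus_unif_sphere)


lemma abs_inner_le_1: "norm (v::'a::real_inner) \<le> 1 \<Longrightarrow> norm w \<le> 1 \<Longrightarrow> \<bar>v \<bullet> w\<bar> \<le> 1"
  using Cauchy_Schwarz_ineq2[of v w] mult_le_one[of "norm v" "norm w"] by simp

lemma AE_PiM_unif_sphere_norm_le:
  "finite I \<Longrightarrow> AE U in PiM I (\<lambda>_. (unif_sphere :: 'a::euclidean_space measure)). \<forall>i\<in>I. norm (U i) \<le> 1"
  by (intro eventually_ball_finite ballI AE_PiM_component[where P = "\<lambda>v. norm v \<le> 1"])
     (auto simp: AE_unif_sphere_norm_le prob_space_unif_sphere)

lemma integrable_PiM_unif_sphere_bounded:
  fixes f :: "('i \<Rightarrow> 'a::euclidean_space) \<Rightarrow> real"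
  assumes "finite I" and "f \<in> borel_measurable (PiM I (\<lambda>_. unif_sphere))"
    and "\<And>U. \<forall>i\<in>I. norm (U i) \<le> 1 \<Longrightarrow> \<bar>f U\<bar> \<le> B"
  shows "integrable (PiM I (\<lambda>_. unif_sphere)) f"
proof -
  interpret prob_space "PiM I (\<lambda>_. unif_sphere :: 'a measure)"
    by (intro prob_space_PiM prob_space_unif_sphere)
  show ?thesis
    using assms AE_PiM_unif_sphere_norm_le[OF \<open>finite I\<close>]
    by (intro integrable_const_bound[where B = B]) (auto elim: eventually_mono)
qed

lemma inner_sgn_square_ge:
  fixes u x :: "'a::euclidean_space"
  assumes "norm u = 1" and "x \<in> ball ((1/2) *\<^sub>R u) (1/4)"
  shows "1/9 \<le> (sgn x \<bullet> u)\<^sup>2"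
proof -
  define e where "e = x - (1/2) *\<^sub>R u"
  have e: "norm e < 1/4"
    using assms(2) by (simp add: e_def dist_norm norm_minus_commute)
  have x_eq: "x = (1/2) *\<^sub>R u + e" by (simp add: e_def)
  have "\<bar>e \<bullet> u\<bar> < 1/4"
    using Cauchy_Schwarz_ineq2[of e u] e assms(1) by simp
  moreover have "u \<bullet> u = 1" using assms(1) by (simp add: dot_square_norm)
  ultimately have xu: "1/4 \<le> x \<bullet> u" by (simp add: x_eq inner_add_left)
  have "norm x \<le> norm ((1/2) *\<^sub>R u) + norm e"
    unfolding x_eq by (rule norm_triangle_ineq)
  then have nx: "norm x \<le> 3/4" using e assms(1) by simp
  have "norm x > 0" using xu by (auto simp: zero_less_norm_iff)
  then have "(1/4) / (3/4) \<le> (x \<bullet> u) / norm x"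
    using xu nx by (intro frac_le) auto
  also have "(x \<bullet> u) / norm x = sgn x \<bullet> u"
    by (simp add: sgn_div_norm inner_scaleR_left field_simps)
  finally have "(1/3)\<^sup>2 \<le> (sgn x \<bullet> u)\<^sup>2" by (intro power_mono) auto
  then show ?thesis by (simp add: power2_eq_square)
qed

lemma integral_unif_sphere_inner_square_pos:
  fixes u :: "'a::euclidean_space"
  assumes "norm u = 1"
  shows "0 < (\<integral>v. (v \<bullet> u)\<^sup>2 \<partial>unif_sphere)"
proof -
  let ?N = "uniform_measure lborel (ball (0::'a) 1)" and ?B = "ball ((1/2) *\<^sub>R u) (1/4)"
  interpret N: prob_space ?N by (intro prob_space_uniform_measure emeasure_lborel_unit_ball)
  have "?B \<subseteq> ball 0 1"
  proof
    fix x assume "x \<in> ?B"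
    then have "norm (x - (1/2) *\<^sub>R u) < 1/4" by (simp add: dist_norm norm_minus_commute)
    moreover have "norm x \<le> norm ((1/2) *\<^sub>R u) + norm (x - (1/2) *\<^sub>R u)"
      using norm_triangle_ineq[of "(1/2) *\<^sub>R u" "x - (1/2) *\<^sub>R u"] by simp
    ultimately show "x \<in> ball 0 1" using assms by simp
  qed
  then have "measure ?N ?B = measure lborel ?B / measure lborel (ball (0::'a) 1)"
    by (subst measure_uniform_measure[OF emeasure_lborel_unit_ball]) (auto simp: Int_absorb1)
  moreover have "0 < measure lborel ?B" "0 < measure lborel (ball (0::'a) 1)"
    using unit_ball_vol_pos[of "real DIM('a)"] by (auto simp: measure_def emeasure_ball)
  ultimately have "0 < (1/9::real) * measure ?N ?B" by simp
  also have "\<dots> = (\<integral>x. (1/9::real) * indicator ?B x \<partial>?N)" by simp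
  also have "\<dots> \<le> (\<integral>x. (sgn x \<bullet> u)\<^sup>2 \<partial>?N)"
  proof (rule integral_mono)
    have "\<bar>sgn x \<bullet> u\<bar> \<le> 1" for x :: 'a
      using assms by (intro abs_inner_le_1) (auto simp: norm_sgn)
    then show "integrable ?N (\<lambda>x. (sgn x \<bullet> u)\<^sup>2)"
      by (intro N.integrable_const_bound[where B = 1]) (auto simp: abs_square_le_1)
    show "integrable ?N (\<lambda>x. (1/9::real) * indicator ?B x)"
      by (intro N.integrable_const_bound[where B = 1]) (auto simp: indicator_def)
    show "(1/9::real) * indicator ?B x \<le> (sgn x \<bullet> u)\<^sup>2" for x
      using inner_sgn_square_ge[OF assms, of x] by (auto simp: indicator_def)
  qed
  also have "\<dots> = (\<integral>v. (v \<bullet> u)\<^sup>2 \<partial>unif_sphere)"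
    unfolding unif_sphere_def by (rule integral_distr[symmetric]) auto
  finally show ?thesis .
qed

lemma integral_PiM_unif_sphere_dist_mult_inner:
  fixes u :: "'a::euclidean_space"
  assumes "finite I" "i \<in> I" "j \<in> I" "l \<in> I" and "norm u = 1"
  shows "(\<integral>U. ((U i - u) \<bullet> (U j - u)) * (U l \<bullet> u) \<partial>PiM I (\<lambda>_. unif_sphere))
           = - (of_bool (l = i) + of_bool (l = j)) * (\<integral>v. (v \<bullet> u)\<^sup>2 \<partial>unif_sphere)"
proof -
  let ?P = "PiM I (\<lambda>_. unif_sphere :: 'a measure)"
  have bounded: "integrable ?P f"
    if "f \<in> borel_measurable ?P" "\<And>U. \<forall>i\<in>I. norm (U i) \<le> 1 \<Longrightarrow> \<bar>f U\<bar> \<le> 1"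
    for f :: "_ \<Rightarrow> real"
    by (rule integrable_PiM_unif_sphere_bounded[OF \<open>finite I\<close> that(1)]) (rule that(2))
  have abs_mult_le_1: "\<bar>a * b\<bar> \<le> 1" if "\<bar>a\<bar> \<le> 1" "\<bar>b\<bar> \<le> (1::real)" for a b
    using that by (simp add: abs_mult mult_le_one)
  have integrable: "integrable ?P (\<lambda>U. (U i \<bullet> U j) * (U l \<bullet> u))"
      "integrable ?P (\<lambda>U. (U i \<bullet> u) * (U l \<bullet> u))" "integrable ?P (\<lambda>U. (U j \<bullet> u) * (U l \<bullet> u))"
      "integrable ?P (\<lambda>U. U l \<bullet> u)"
    using assms by (auto intro!: bounded abs_mult_le_1 abs_inner_le_1)
  have "u \<bullet> u = 1" using assms(5) by (simp add: dot_square_norm)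
  then have "(\<integral>U. ((U i - u) \<bullet> (U j - u)) * (U l \<bullet> u) \<partial>?P) =
      (\<integral>U. (U i \<bullet> U j) * (U l \<bullet> u) - (U i \<bullet> u) * (U l \<bullet> u) - (U j \<bullet> u) * (U l \<bullet> u) + U l \<bullet> u \<partial>?P)"
    by (intro Bochner_Integration.integral_cong)
       (simp_all add: inner_diff_left inner_diff_right inner_commute algebra_simps)
  also have "\<dots> = (\<integral>U. (U i \<bullet> U j) * (U l \<bullet> u) \<partial>?P) - (\<integral>U. (U i \<bullet> u) * (U l \<bullet> u) \<partial>?P)
      - (\<integral>U. (U j \<bullet> u) * (U l \<bullet> u) \<partial>?P) + (\<integral>U. U l \<bullet> u \<partial>?P)"
    using integrable by simp
  also have "\<dots> = - (if i = l then (\<integral>v. (v \<bullet> u)\<^sup>2 \<partial>unif_sphere) else 0)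
      - (if j = l then (\<integral>v. (v \<bullet> u)\<^sup>2 \<partial>unif_sphere) else 0)"
    using assms
    by (simp add: unif_sphere.integral_PiM_inner_mult_inner_component_eq_0
                  unif_sphere.integral_PiM_inner_mult_inner_component
                  unif_sphere.integral_PiM_inner_component_eq_0)
  also have "\<dots> = - (of_bool (l = i) + of_bool (l = j)) * (\<integral>v. (v \<bullet> u)\<^sup>2 \<partial>unif_sphere)"
    by (simp add: algebra_simps eq_commute[of l])
  finally show ?thesis .
qed


section \<open>Expectations of random softmax quadratic forms\<close>

locale random_softmax_quadform = prob_space M for M :: "'b measure" +
  fixes n :: nat and a :: "nat \<Rightarrow> real" and B :: real
    and D :: "'b \<Rightarrow> nat \<Rightarrow> nat \<Rightarrow> real" and X :: "'b \<Rightarrow> nat \<Rightarrow> real"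
  assumes n_pos: "0 < n" and a_pos: "\<forall>i<n. 0 < a i"
    and measurable_D [measurable]: "\<And>i j. i \<in> {..<n} \<Longrightarrow> j \<in> {..<n} \<Longrightarrow> (\<lambda>\<omega>. D \<omega> i j) \<in> borel_measurable M"
    and measurable_X [measurable]: "\<And>i. i \<in> {..<n} \<Longrightarrow> (\<lambda>\<omega>. X \<omega> i) \<in> borel_measurable M"
    and AE_bounded: "AE \<omega> in M. (\<forall>i<n. \<forall>j<n. \<bar>D \<omega> i j\<bar> \<le> B) \<and> (\<forall>i<n. \<bar>X \<omega> i\<bar> \<le> 1)"
begin

lemma borel_measurable_softmax_weight [measurable]:
  "i \<in> {..<n} \<Longrightarrow> (\<lambda>\<omega>. softmax_weight n (X \<omega>) a t i) \<in> borel_measurable M"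
  unfolding softmax_weight_def by measurable

lemma borel_measurable_softmax_quadform [measurable]:
  "(\<lambda>\<omega>. softmax_quadform n (D \<omega>) (X \<omega>) a t) \<in> borel_measurable M"
  unfolding softmax_quadform_def by measurable

lemma borel_measurable_softmax_quadform_deriv [measurable]:
  "(\<lambda>\<omega>. softmax_quadform_deriv n (D \<omega>) (X \<omega>) a t) \<in> borel_measurable M"
  unfolding softmax_quadform_deriv_def softmax_mean_def by measurable

lemma integrable_softmax_quadform:
  "integrable M (\<lambda>\<omega>. softmax_quadform n (D \<omega>) (X \<omega>) a t)"
  using AE_bounded
  by (intro integrable_const_bound[where B = B])
     (auto elim!: eventually_mono intro: abs_softmax_quadform_le[OF n_pos a_pos])

lemma integrable_D_mult_X:
  assumes "i < n" "j < n" "l < n"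
  shows "integrable M (\<lambda>\<omega>. D \<omega> i j * X \<omega> l)"
proof (rule integrable_const_bound[where B = B])
  show "AE \<omega> in M. norm (D \<omega> i j * X \<omega> l) \<le> B"
  proof (rule eventually_mono[OF AE_bounded], elim conjE)
    fix \<omega> assume "\<forall>i<n. \<forall>j<n. \<bar>D \<omega> i j\<bar> \<le> B" "\<forall>i<n. \<bar>X \<omega> i\<bar> \<le> 1"
    then have "\<bar>D \<omega> i j\<bar> * \<bar>X \<omega> l\<bar> \<le> B * 1"
      using assms by (intro mult_mono) force+
    then show "norm (D \<omega> i j * X \<omega> l) \<le> B" by (simp add: abs_mult)
  qed
qed (use assms in simp)

lemma diff_quotient_integral_softmax_quadform_tendsto:
  assumes "c \<longlonglongrightarrow> 0" and c_pos: "\<And>k. 0 < c k"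
  shows "(\<lambda>k. ((\<integral>\<omega>. softmax_quadform n (D \<omega>) (X \<omega>) a (c k) \<partial>M)
                - (\<integral>\<omega>. softmax_quadform n (D \<omega>) (X \<omega>) a 0 \<partial>M)) / c k)
           \<longlonglongrightarrow> (\<integral>\<omega>. softmax_quadform_deriv n (D \<omega>) (X \<omega>) a 0 \<partial>M)"
proof -
  let ?Q = "\<lambda>t \<omega>. softmax_quadform n (D \<omega>) (X \<omega>) a t"
  have "(\<lambda>k. \<integral>\<omega>. (?Q (c k) \<omega> - ?Q 0 \<omega>) / c k \<partial>M)
      \<longlonglongrightarrow> (\<integral>\<omega>. softmax_quadform_deriv n (D \<omega>) (X \<omega>) a 0 \<partial>M)"
  proof (rule integral_dominated_convergence[where w = "\<lambda>_. 4 * B"])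
    show "AE \<omega> in M. (\<lambda>k. (?Q (c k) \<omega> - ?Q 0 \<omega>) / c k)
        \<longlonglongrightarrow> softmax_quadform_deriv n (D \<omega>) (X \<omega>) a 0"
      using assms less_imp_neq[OF c_pos]
      by (intro AE_I2 softmax_quadform_diff_quotient_tendsto[OF n_pos a_pos]) auto
    show "AE \<omega> in M. norm ((?Q (c k) \<omega> - ?Q 0 \<omega>) / c k) \<le> 4 * B" for k
      using AE_bounded
    proof eventually_elim
      case (elim \<omega>)
      then have "\<bar>?Q (c k) \<omega> - ?Q 0 \<omega>\<bar> \<le> 4 * B * c k"
        using c_pos by (intro abs_softmax_quadform_diff_le[OF n_pos a_pos]) auto
      then show ?case
        using c_pos[of k] by (simp add: abs_divide divide_le_eq)
    qed
  qed auto
  then show ?thesis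
    using integrable_softmax_quadform by (simp add: Bochner_Integration.integral_diff)
qed

lemma integral_softmax_quadform_deriv_0:
  "(\<integral>\<omega>. softmax_quadform_deriv n (D \<omega>) (X \<omega>) a 0 \<partial>M) =
     (\<Sum>i<n. \<Sum>j<n. \<Sum>l<n. a i / (\<Sum>k<n. a k) * (a j / (\<Sum>k<n. a k))
        * (of_bool (l = i) + of_bool (l = j) - 2 * (a l / (\<Sum>k<n. a k))) * (\<integral>\<omega>. D \<omega> i j * X \<omega> l \<partial>M))"
proof -
  define \<kappa> where "\<kappa> i j l = a i / (\<Sum>k<n. a k) * (a j / (\<Sum>k<n. a k))
      * (of_bool (l = i) + of_bool (l = j) - 2 * (a l / (\<Sum>k<n. a k)))" for i j l
  have integrable: "integrable M (\<lambda>\<omega>. \<kappa> i j l * (D \<omega> i j * X \<omega> l))"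
    if "i \<in> {..<n}" "j \<in> {..<n}" "l \<in> {..<n}" for i j l
    using that by (simp add: integrable_D_mult_X)
  have "(\<integral>\<omega>. (\<Sum>i<n. \<Sum>j<n. \<Sum>l<n. \<kappa> i j l * (D \<omega> i j * X \<omega> l)) \<partial>M)
      = (\<Sum>i<n. \<integral>\<omega>. (\<Sum>j<n. \<Sum>l<n. \<kappa> i j l * (D \<omega> i j * X \<omega> l)) \<partial>M)"
    by (intro Bochner_Integration.integral_sum Bochner_Integration.integrable_sum integrable)
  also have "\<dots> = (\<Sum>i<n. \<Sum>j<n. \<integral>\<omega>. (\<Sum>l<n. \<kappa> i j l * (D \<omega> i j * X \<omega> l)) \<partial>M)"
    by (intro sum.cong refl Bochner_Integration.integral_sum Bochner_Integration.integrable_sum integrable)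
  also have "\<dots> = (\<Sum>i<n. \<Sum>j<n. \<Sum>l<n. \<integral>\<omega>. \<kappa> i j l * (D \<omega> i j * X \<omega> l) \<partial>M)"
    by (intro sum.cong refl Bochner_Integration.integral_sum integrable)
  finally have "(\<integral>\<omega>. (\<Sum>i<n. \<Sum>j<n. \<Sum>l<n. \<kappa> i j l * (D \<omega> i j * X \<omega> l)) \<partial>M)
      = (\<Sum>i<n. \<Sum>j<n. \<Sum>l<n. \<kappa> i j l * (\<integral>\<omega>. D \<omega> i j * X \<omega> l \<partial>M))"
    by simp
  then show ?thesis
    unfolding softmax_quadform_deriv_0 \<kappa>_def .
qed

end


section \<open>The objective near \<open>c = 0\<close>\<close>

lemma Jobj_eq_integral_softmax_quadform:
  assumes "0 < n" and "\<forall>i<n. 0 < \<alpha> i"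
  shows "Jobj n u \<alpha> ca cu \<sigma> c =
     ca\<^sup>2 * cu\<^sup>2 * (\<integral>U. softmax_quadform n (\<lambda>i j. (U i - u) \<bullet> (U j - u)) (\<lambda>i. U i \<bullet> u) \<alpha> (cu\<^sup>2 * c)
                        \<partial>PiM {..<n} (\<lambda>_. unif_sphere))
     + \<sigma>\<^sup>2 * (\<integral>U. softmax_quadform n (\<lambda>i j. of_bool (i = j)) (\<lambda>i. U i \<bullet> u) \<alpha> (cu\<^sup>2 * c)
                        \<partial>PiM {..<n} (\<lambda>_. unif_sphere))"
  unfolding softmax_quadform_diagonal_eq[OF assms] softmax_quadform_eq[OF assms] Jobj_def
  by (simp add: mult.assoc)


lemma random_softmax_quadform_unif_sphere:
  fixes u :: "'a::euclidean_space"
  assumes "0 < n" and "\<forall>i<n. 0 < \<alpha> i" and u: "norm u = 1"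
  shows random_softmax_quadform_unif_sphere_dist:
      "random_softmax_quadform (PiM {..<n} (\<lambda>_. unif_sphere)) n \<alpha> 4
         (\<lambda>U i j. (U i - u) \<bullet> (U j - u)) (\<lambda>U i. U i \<bullet> u)"
    and random_softmax_quadform_unif_sphere_diagonal:
      "random_softmax_quadform (PiM {..<n} (\<lambda>_. unif_sphere)) n \<alpha> 1
         (\<lambda>U i j. of_bool (i = j)) (\<lambda>U i. U i \<bullet> u)"
proof -
  let ?P = "PiM {..<n} (\<lambda>_. unif_sphere :: 'a measure)"
  have bounded_dist: "\<bar>(v - u) \<bullet> (w - u)\<bar> \<le> 4" if "norm v \<le> 1" "norm w \<le> 1" for v w
  proof -
    have "norm (v - u) \<le> 2" "norm (w - u) \<le> 2"
      using that u norm_triangle_ineq4[of v u] norm_triangle_ineq4[of w u] by auto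
    then show ?thesis
      using Cauchy_Schwarz_ineq2[of "v - u" "w - u"] mult_mono[of "norm (v - u)" 2 "norm (w - u)" 2]
      by simp
  qed
  have bounded_inner: "\<bar>v \<bullet> u\<bar> \<le> 1" if "norm v \<le> 1" for v
    using that u by (intro abs_inner_le_1) auto
  have "AE U in ?P. \<forall>i\<in>{..<n}. norm (U i) \<le> 1"
    by (rule AE_PiM_unif_sphere_norm_le) simp
  then have AE_bounds: "AE U in ?P. (\<forall>i<n. \<forall>j<n. \<bar>(U i - u) \<bullet> (U j - u)\<bar> \<le> 4) \<and> (\<forall>i<n. \<bar>U i \<bullet> u\<bar> \<le> 1)"
    by (rule eventually_mono) (auto intro!: bounded_dist bounded_inner)
  have [measurable]: "(\<lambda>U. U i) \<in> borel_measurable ?P" if "i \<in> {..<n}" for i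
    using that by measurable
  have "prob_space ?P" by (intro prob_space_PiM prob_space_unif_sphere)
  then show "random_softmax_quadform ?P n \<alpha> 4 (\<lambda>U i j. (U i - u) \<bullet> (U j - u)) (\<lambda>U i. U i \<bullet> u)"
    and "random_softmax_quadform ?P n \<alpha> 1 (\<lambda>U i j. of_bool (i = j)) (\<lambda>U i. U i \<bullet> u)"
    by (intro random_softmax_quadform.intro random_softmax_quadform_axioms.intro;
        use assms AE_bounds in \<open>auto elim!: eventually_mono\<close>)+
qed

lemma integral_softmax_quadform_deriv_dist_0:
  fixes u :: "'a::euclidean_space"
  assumes "0 < n" and "\<forall>i<n. 0 < \<alpha> i" and u: "norm u = 1"
  shows "(\<integral>U. softmax_quadform_deriv n (\<lambda>i j. (U i - u) \<bullet> (U j - u)) (\<lambda>i. U i \<bullet> u) \<alpha> 0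
            \<partial>PiM {..<n} (\<lambda>_. unif_sphere))
       = - 2 * (\<integral>v. (v \<bullet> u)\<^sup>2 \<partial>unif_sphere) * (1 - (\<Sum>i<n. (\<alpha> i / (\<Sum>k<n. \<alpha> k))\<^sup>2))"
proof -
  interpret random_softmax_quadform "PiM {..<n} (\<lambda>_. unif_sphere)" n \<alpha> 4
      "\<lambda>U i j. (U i - u) \<bullet> (U j - u)" "\<lambda>U i. U i \<bullet> u"
    by (rule random_softmax_quadform_unif_sphere_dist[OF assms])
  let ?m = "\<integral>v. (v \<bullet> u)\<^sup>2 \<partial>unif_sphere" and ?q = "\<lambda>i. \<alpha> i / (\<Sum>k<n. \<alpha> k)"
  have "0 < (\<Sum>k<n. \<alpha> k)"
    using assms by (intro sum_pos) (auto simp: lessThan_empty_iff)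
  then have sum_q: "(\<Sum>i<n. ?q i) = 1"
    by (simp add: sum_divide_distrib[symmetric])
  have moment: "(\<integral>U. (U i - u) \<bullet> (U j - u) * (U l \<bullet> u) \<partial>PiM {..<n} (\<lambda>_. unif_sphere))
      = - ((of_bool (l = i) + of_bool (l = j)) * ?m)" if "i < n" "j < n" "l < n" for i j l
    using that integral_PiM_unif_sphere_dist_mult_inner[OF _ _ _ _ u, of "{..<n}" i j l] by simp
  have "(\<integral>U. softmax_quadform_deriv n (\<lambda>i j. (U i - u) \<bullet> (U j - u)) (\<lambda>i. U i \<bullet> u) \<alpha> 0
            \<partial>PiM {..<n} (\<lambda>_. unif_sphere))
      = - ?m * (\<Sum>i<n. \<Sum>j<n. \<Sum>l<n. ?q i * ?q j * (of_bool (l = i) + of_bool (l = j) - 2 * ?q l)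
                  * (of_bool (l = i) + of_bool (l = j)))"
    unfolding integral_softmax_quadform_deriv_0
    by (simp add: moment) (simp add: sum_distrib_left sum_negf mult_ac)
  also have "\<dots> = - 2 * ?m * (1 - (\<Sum>i<n. (?q i)\<^sup>2))"
    unfolding sum_weight_pairs_centered_eq[OF sum_q] by simp
  finally show ?thesis .
qed

lemma integral_softmax_quadform_deriv_diagonal_0:
  fixes u :: "'a::euclidean_space"
  assumes "0 < n" and "\<forall>i<n. 0 < \<alpha> i" and "norm u = 1"
  shows "(\<integral>U. softmax_quadform_deriv n (\<lambda>i j. of_bool (i = j)) (\<lambda>i. U i \<bullet> u) \<alpha> 0
            \<partial>PiM {..<n} (\<lambda>_. unif_sphere)) = 0"
proof -
  interpret random_softmax_quadform "PiM {..<n} (\<lambda>_. unif_sphere)" n \<alpha> 1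
      "\<lambda>U i j. of_bool (i = j)" "\<lambda>U i. U i \<bullet> u"
    by (rule random_softmax_quadform_unif_sphere_diagonal[OF assms])
  show ?thesis
    unfolding integral_softmax_quadform_deriv_0
    by (simp add: unif_sphere.integral_PiM_inner_component_eq_0)
qed

lemma Jobj_diff_quotient_tendsto:
  fixes u :: "'a::euclidean_space"
  assumes "0 < n" and \<alpha>_pos: "\<forall>i<n. 0 < \<alpha> i" and u: "norm u = 1"
    and "c \<longlonglongrightarrow> 0" and c_pos: "\<And>k. 0 < c k" and "cu \<noteq> 0"
  shows "(\<lambda>k. (Jobj n u \<alpha> ca cu \<sigma> (c k) - Jobj n u \<alpha> ca cu \<sigma> 0) / c k)
     \<longlonglongrightarrow> - 2 * ca\<^sup>2 * cu\<^sup>2 * cu\<^sup>2 * (\<integral>v. (v \<bullet> u)\<^sup>2 \<partial>unif_sphere)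
           * (1 - (\<Sum>i<n. (\<alpha> i / (\<Sum>k<n. \<alpha> k))\<^sup>2))"
proof -
  interpret dist: random_softmax_quadform "PiM {..<n} (\<lambda>_. unif_sphere)" n \<alpha> 4
      "\<lambda>U i j. (U i - u) \<bullet> (U j - u)" "\<lambda>U i. U i \<bullet> u"
    by (rule random_softmax_quadform_unif_sphere_dist[OF assms(1-3)])
  interpret diag: random_softmax_quadform "PiM {..<n} (\<lambda>_. unif_sphere)" n \<alpha> 1
      "\<lambda>U i j. of_bool (i = j)" "\<lambda>U i. U i \<bullet> u"
    by (rule random_softmax_quadform_unif_sphere_diagonal[OF assms(1-3)])
  define I_dist where "I_dist t = (\<integral>U. softmax_quadform n (\<lambda>i j. (U i - u) \<bullet> (U j - u))
      (\<lambda>i. U i \<bullet> u) \<alpha> t \<partial>PiM {..<n} (\<lambda>_. unif_sphere))" for t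
  define I_diag where "I_diag t = (\<integral>U. softmax_quadform n (\<lambda>i j. of_bool (i = j))
      (\<lambda>i. U i \<bullet> u) \<alpha> t \<partial>PiM {..<n} (\<lambda>_. unif_sphere))" for t
  define t where "t k = cu\<^sup>2 * c k" for k
  have t_lim: "t \<longlonglongrightarrow> 0"
    unfolding t_def using tendsto_mult_left[OF \<open>c \<longlonglongrightarrow> 0\<close>, of "cu\<^sup>2"] by simp
  have t_pos: "0 < t k" for k
    using c_pos[of k] \<open>cu \<noteq> 0\<close> by (simp add: t_def)
  have "(\<lambda>k. cu\<^sup>2 * (ca\<^sup>2 * cu\<^sup>2 * ((I_dist (t k) - I_dist 0) / t k) + \<sigma>\<^sup>2 * ((I_diag (t k) - I_diag 0) / t k)))
      \<longlonglongrightarrow> cu\<^sup>2 * (ca\<^sup>2 * cu\<^sup>2 * (- 2 * (\<integral>v. (v \<bullet> u)\<^sup>2 \<partial>unif_sphere)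
            * (1 - (\<Sum>i<n. (\<alpha> i / (\<Sum>k<n. \<alpha> k))\<^sup>2))) + \<sigma>\<^sup>2 * 0)"
    using dist.diff_quotient_integral_softmax_quadform_tendsto[OF t_lim t_pos]
      diag.diff_quotient_integral_softmax_quadform_tendsto[OF t_lim t_pos]
    unfolding integral_softmax_quadform_deriv_dist_0[OF assms(1-3)]
      integral_softmax_quadform_deriv_diagonal_0[OF assms(1-3)] I_dist_def I_diag_def
    by (intro tendsto_intros)
  moreover have "(Jobj n u \<alpha> ca cu \<sigma> (c k) - Jobj n u \<alpha> ca cu \<sigma> 0) / c k
      = cu\<^sup>2 * (ca\<^sup>2 * cu\<^sup>2 * ((I_dist (t k) - I_dist 0) / t k) + \<sigma>\<^sup>2 * ((I_diag (t k) - I_diag 0) / t k))" for k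
    using c_pos[of k] \<open>cu \<noteq> 0\<close>
    unfolding Jobj_eq_integral_softmax_quadform[OF \<open>0 < n\<close> \<alpha>_pos] I_dist_def I_diag_def t_def
    by (simp add: field_simps)
  ultimately show ?thesis
    by (simp add: mult_ac)
qed


theorem mainTheorem16:
  fixes n :: nat and u :: "'a::euclidean_space" and \<alpha> :: "nat \<Rightarrow> real"
    and ca cu \<sigma> \<delta> :: real
  assumes "n \<ge> 2"
    and "u \<in> sphere 0 1"
    and "\<forall>i<n. \<alpha> i > 0"
    and "ca \<noteq> 0" and "cu \<noteq> 0"
    and "\<sigma> \<ge> 0"
    and "\<delta> > 0"
  shows "\<not> (\<forall>c\<in>{0..\<delta>}. Jobj n u \<alpha> ca cu \<sigma> 0 \<le> Jobj n u \<alpha> ca cu \<sigma> c)"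
proof
  assume minimal: "\<forall>c\<in>{0..\<delta>}. Jobj n u \<alpha> ca cu \<sigma> 0 \<le> Jobj n u \<alpha> ca cu \<sigma> c"
  define c where "c k = \<delta> / real (Suc k)" for k
  have c_pos: "0 < c k" and c_le: "c k \<le> \<delta>" for k
    using \<open>\<delta> > 0\<close> by (simp_all add: c_def divide_le_eq)
  have "c \<longlonglongrightarrow> 0"
    unfolding c_def by (rule LIMSEQ_Suc[OF lim_const_over_n])
  have "0 < n" and u: "norm u = 1" using assms by auto
  have "0 < (\<integral>v. (v \<bullet> u)\<^sup>2 \<partial>unif_sphere)" "(\<Sum>i<n. (\<alpha> i / (\<Sum>k<n. \<alpha> k))\<^sup>2) < 1"
    using assms u integral_unif_sphere_inner_square_pos sum_normalized_square_lt_1 by auto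
  then have "- 2 * ca\<^sup>2 * cu\<^sup>2 * cu\<^sup>2 * (\<integral>v. (v \<bullet> u)\<^sup>2 \<partial>unif_sphere)
      * (1 - (\<Sum>i<n. (\<alpha> i / (\<Sum>k<n. \<alpha> k))\<^sup>2)) < 0"
    using assms by (simp add: mult_pos_pos mult_neg_pos)
  from order_tendstoD(2)[OF Jobj_diff_quotient_tendsto[OF \<open>0 < n\<close> assms(3) u \<open>c \<longlonglongrightarrow> 0\<close> c_pos
      \<open>cu \<noteq> 0\<close>, where \<sigma> = \<sigma>] this]
  obtain k where "(Jobj n u \<alpha> ca cu \<sigma> (c k) - Jobj n u \<alpha> ca cu \<sigma> 0) / c k < 0"
    unfolding eventually_sequentially by blast
  then have "Jobj n u \<alpha> ca cu \<sigma> (c k) < Jobj n u \<alpha> ca cu \<sigma> 0"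
    using c_pos[of k] by (simp add: divide_less_0_iff)
  moreover have "c k \<in> {0..\<delta>}" using c_pos[of k] c_le[of k] by simp
  ultimately show False using minimal by fastforce
qed

end
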